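(* Let $n\ge 1$ be an integer. Every set $A\subseteq\mathbb{Z}_{2^n}$ with $|A|=2^{n-1}+1$ satisfies $\mathrm{ST}(A)\ge 3\cdot 2^{n-1}$.
   Context: For $A\subseteq\mathbb{Z}_{2^n}$, $\mathrm{ST}(A)=|\{(x,y,z)\in A^3: x+y=z \text{ in } \mathbb{Z}_{2^n}\}|$ is the number of (ordered) Schur triples in $A$; in particular $(x,y,z)$ and $(y,x,z)$ are counted separately when $x\ne y$, and $x=y$ is allowed. *)

theory Defs
  imports Main
begin

text \<open>Z_(2^n) is represented by the residues {0..<2^n} (nat), with addition mod 2^n.
  ST counts ordered triples (x,y,z) in A^3 with x + y = z in Z_(2^n).\<close>

definition schur_triples :: "nat \<Rightarrow> nat set \<Rightarrow> nat" where
  "schur_triples n A = card {(x, y, z). x \<in> A \<and> y \<in> A \<and> z \<in> A \<and> (x + y) mod 2 ^ n = z}"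

end

theory Submission
  imports Defs "HOL-Number_Theory.Cong"
begin

text \<open>For \<open>X \<subseteq> \<int>/2\<^sup>n\<close> let \<open>r\<^sub>X(x) = |{y \<in> X. x + y \<in> X}|\<close>, the number of ways of writing \<open>x\<close> as
  a difference of two elements of \<open>X\<close>, and let \<open>B\<close> be the complement of \<open>A\<close>. Counting
  the \<open>y \<in> A\<close> with \<open>x + y \<in> B\<close> in two ways, as \<open>|A| - r\<^sub>A(x)\<close> and (since \<open>y \<mapsto> x + y\<close> is a
  bijection) as \<open>|B| - r\<^sub>B(x)\<close>, gives \<open>r\<^sub>A(x) = r\<^sub>B(x) + 2\<close>. Hence
  \<open>ST(A) = \<Sum>\<^sub>x\<^sub>\<in>\<^sub>A r\<^sub>B(x) + 2|A|\<close>, and it suffices to show \<open>\<Sum>\<^sub>x\<^sub>\<in>\<^sub>A r\<^sub>B(x) \<ge> |B| - 1\<close>.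
  This is clear if \<open>0 \<in> A\<close>, since \<open>r\<^sub>B(0) = |B|\<close>. Otherwise \<open>0 \<in> B\<close>, so \<open>n \<ge> 2\<close> and
  \<open>|B| = 2\<^sup>n\<^sup>-\<^sup>1 - 1\<close> is odd. Now \<open>\<Sum>\<^sub>x r\<^sub>B(x) = |B|\<^sup>2\<close>, and for \<open>0 \<noteq> x \<in> B\<close> we have
  \<open>r\<^sub>B(x) < |B|\<close>: equality would make \<open>B\<close> closed under adding \<open>x\<close>, hence a union of
  cosets of the subgroup generated by \<open>x\<close>, which has even order. So \<open>B\<close> contributes at most
  \<open>|B| + (|B| - 1)\<^sup>2\<close> to \<open>|B|\<^sup>2\<close>, and the remaining \<open>|B| - 1\<close> comes from \<open>A\<close>.\<close>

definition diff_reps :: "nat \<Rightarrow> nat set \<Rightarrow> nat \<Rightarrow> nat" where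
  "diff_reps N B x = card {y \<in> B. (x + y) mod N \<in> B}"

lemma bij_betw_add_mod:
  fixes N x :: nat
  assumes "0 < N"
  shows "bij_betw (\<lambda>y. (x + y) mod N) {0..<N} {0..<N}"
proof -
  have "inj_on (\<lambda>y. (x + y) mod N) {0..<N}"
  proof (rule inj_onI)
    fix a b assume "a \<in> {0..<N}" "b \<in> {0..<N}" "(x + a) mod N = (x + b) mod N"
    then have "[a = b] (mod N)"
      by (simp add: cong_def[symmetric] cong_add_lcancel_nat)
    then show "a = b"
      using \<open>a \<in> {0..<N}\<close> \<open>b \<in> {0..<N}\<close> by (simp add: cong_def)
  qed
  moreover have "(\<lambda>y. (x + y) mod N) ` {0..<N} \<subseteq> {0..<N}"
    using assms by auto
  ultimately show ?thesis
    unfolding bij_betw_def using endo_inj_surj by blast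
qed

lemma card_add_mod_preimage:
  fixes N x :: nat
  assumes "0 < N" "B \<subseteq> {0..<N}"
  shows "card {y \<in> {0..<N}. (x + y) mod N \<in> B} = card B"
proof -
  let ?f = "\<lambda>y. (x + y) mod N"
  have bij: "bij_betw ?f {0..<N} {0..<N}"
    by (rule bij_betw_add_mod[OF assms(1)])
  have "?f ` {y \<in> {0..<N}. ?f y \<in> B} = ?f ` {0..<N} \<inter> B"
    by blast
  also have "\<dots> = B"
    using bij assms(2) by (simp add: bij_betw_def Int_absorb1)
  finally have image: "?f ` {y \<in> {0..<N}. ?f y \<in> B} = B" .
  have "bij_betw ?f {y \<in> {0..<N}. ?f y \<in> B} B"
    by (rule bij_betw_subset[OF bij _ image]) auto
  then show ?thesis
    by (rule bij_betw_same_card)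
qed

lemma diff_reps_le_card: "finite B \<Longrightarrow> diff_reps N B x \<le> card B"
  unfolding diff_reps_def by (rule card_mono) auto

lemma diff_reps_0:
  assumes "B \<subseteq> {0..<N}"
  shows "diff_reps N B 0 = card B"
proof -
  have "{y \<in> B. (0 + y) mod N \<in> B} = B"
    using assms by auto
  then show ?thesis
    unfolding diff_reps_def by simp
qed

lemma diff_reps_complement:
  assumes "0 < N" "A \<subseteq> {0..<N}"
  shows "diff_reps N A x + card ({0..<N} - A) = card A + diff_reps N ({0..<N} - A) x"
proof -
  define B where "B = {0..<N} - A"
  let ?to = "\<lambda>X Y. {y \<in> X. (x + y) mod N \<in> Y}"
  have fin: "finite A" "finite B"
    using assms(2) finite_subset unfolding B_def by auto
  have "card A = card (?to A A \<union> ?to A B)"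
    using assms unfolding B_def by (intro arg_cong[where f = card]) auto
  also have "\<dots> = card (?to A A) + card (?to A B)"
    using fin by (intro card_Un_disjoint) (auto simp: B_def)
  finally have A_split: "card A = diff_reps N A x + card (?to A B)"
    unfolding diff_reps_def .
  have "B \<subseteq> {0..<N}"
    unfolding B_def by blast
  have "card B = card (?to {0..<N} B)"
    using card_add_mod_preimage[OF assms(1) \<open>B \<subseteq> {0..<N}\<close>] by simp
  also have "\<dots> = card (?to A B \<union> ?to B B)"
    using assms unfolding B_def by (intro arg_cong[where f = card]) auto
  also have "\<dots> = card (?to A B) + card (?to B B)"
    using fin by (intro card_Un_disjoint) (auto simp: B_def)
  finally have B_split: "card B = card (?to A B) + diff_reps N B x"
    unfolding diff_reps_def .
  from A_split B_split show ?thesis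
    unfolding B_def by linarith
qed

lemma sum_diff_reps:
  assumes "0 < N" "B \<subseteq> {0..<N}"
  shows "(\<Sum>x\<in>{0..<N}. diff_reps N B x) = card B ^ 2"
proof -
  have "finite B"
    using assms(2) finite_subset by blast
  have "(\<Sum>x\<in>{0..<N}. diff_reps N B x)
      = (\<Sum>x\<in>{0..<N}. \<Sum>y\<in>B. if (x + y) mod N \<in> B then 1 else 0)"
    unfolding diff_reps_def using \<open>finite B\<close> by (simp add: sum.If_cases Int_def conj_commute)
  also have "\<dots> = (\<Sum>y\<in>B. \<Sum>x\<in>{0..<N}. if (y + x) mod N \<in> B then 1 else 0)"
    by (subst sum.swap) (simp add: add.commute)
  also have "\<dots> = (\<Sum>y\<in>B. card {x \<in> {0..<N}. (y + x) mod N \<in> B})"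
    by (simp add: sum.If_cases Int_def conj_commute)
  also have "\<dots> = (\<Sum>y\<in>B. card B)"
    using card_add_mod_preimage[OF assms] by simp
  finally show ?thesis
    by (simp add: power2_eq_square)
qed

lemma schur_triples_eq_sum_diff_reps:
  assumes "finite A"
  shows "schur_triples n A = (\<Sum>x\<in>A. diff_reps (2 ^ n) A x)"
proof -
  let ?pairs = "SIGMA x:A. {y \<in> A. (x + y) mod 2 ^ n \<in> A}"
  have "{(x, y, z). x \<in> A \<and> y \<in> A \<and> z \<in> A \<and> (x + y) mod 2 ^ n = z}
      = (\<lambda>(x, y). (x, y, (x + y) mod 2 ^ n)) ` ?pairs"
    by auto
  moreover have "inj_on (\<lambda>(x, y). (x, y, (x + y) mod 2 ^ n)) ?pairs"
    by (auto simp: inj_on_def)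
  ultimately have "schur_triples n A = card ?pairs"
    unfolding schur_triples_def by (simp add: card_image)
  also have "\<dots> = (\<Sum>x\<in>A. diff_reps (2 ^ n) A x)"
    unfolding diff_reps_def using assms by (intro card_SigmaI) auto
  finally show ?thesis .
qed

lemma add_mod_closed_multiple:
  fixes N x y k :: nat
  assumes "B \<subseteq> {0..<N}" "\<forall>y\<in>B. (y + x) mod N \<in> B" "y \<in> B"
  shows "(y + k * x) mod N \<in> B"
proof (induction k)
  case 0
  then show ?case
    using assms(1,3) by auto
next
  case (Suc k)
  have "(y + Suc k * x) mod N = ((y + k * x) mod N + x) mod N"
    by (simp add: mod_add_right_eq add_ac)
  then show ?case
    using Suc assms(2) by auto
qed

lemma even_card_if_add_mod_closed_half:
  fixes h :: nat
  assumes "B \<subseteq> {0..<2 * h}" "\<forall>y\<in>B. (y + h) mod (2 * h) \<in> B"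
  shows "even (card B)"
proof -
  define low where "low = {y \<in> B. y < h}"
  define high where "high = {y \<in> B. h \<le> y}"
  have "finite B"
    using assms(1) finite_subset by blast
  have up: "y + h \<in> B" if "y \<in> B" "y < h" for y
  proof -
    have "(y + h) mod (2 * h) = y + h"
      using that(2) by simp
    then show ?thesis
      using assms(2) that(1) by metis
  qed
  have down: "z - h \<in> B" if "z \<in> B" "h \<le> z" for z
  proof -
    have "z < 2 * h"
      using assms(1) that(1) by auto
    then have "(z + h) mod (2 * h) = z - h"
      using that(2) by (simp add: mod_if)
    then show ?thesis
      using assms(2) that(1) by metis
  qed
  have "(\<lambda>y. y + h) ` low = high"
  proof (intro equalityI subsetI)
    fix z assume "z \<in> (\<lambda>y. y + h) ` low"
    then show "z \<in> high"
      using up unfolding low_def high_def by auto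
  next
    fix z assume "z \<in> high"
    then have "z - h \<in> low" "z = (z - h) + h"
      using down assms(1) unfolding low_def high_def by auto
    then show "z \<in> (\<lambda>y. y + h) ` low"
      by (rule rev_image_eqI)
  qed
  then have "card high = card low"
    using card_image[of "\<lambda>y. y + h" low] by simp
  moreover have "card B = card low + card high"
  proof -
    have "B = low \<union> high" "low \<inter> high = {}"
      unfolding low_def high_def by auto
    then show ?thesis
      using \<open>finite B\<close> by (simp add: card_Un_disjoint)
  qed
  ultimately show ?thesis
    by simp
qed

lemma multiple_mod_pow2_eq_half:
  fixes x :: nat
  assumes "0 < x" "x < 2 ^ n"
  obtains k where "(k * x) mod 2 ^ n = 2 ^ (n - 1)"
proof -
  obtain v u where u: "x = 2 ^ v * u" "odd u"
    using multiplicity_decompose'[of x 2] assms(1) by (metis not_gr0 odd_one)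
  then have "2 ^ v \<le> x"
    by (cases u) auto
  then have "(2::nat) ^ v < 2 ^ n"
    using assms(2) by linarith
  then have "v < n"
    by simp
  obtain w where "u = 2 * w + 1"
    using u(2) oddE by blast
  have "n - 1 - v + v = n - 1"
    using \<open>v < n\<close> by simp
  then have "2 ^ (n - 1 - v) * x = 2 ^ (n - 1) * u"
    unfolding u(1) by (metis mult.assoc power_add)
  also have "\<dots> = 2 ^ (n - 1) + w * 2 ^ n"
    using \<open>u = 2 * w + 1\<close> \<open>v < n\<close> by (cases n) (simp_all add: algebra_simps)
  finally have "(2 ^ (n - 1 - v) * x) mod 2 ^ n = 2 ^ (n - 1)"
    using \<open>v < n\<close> by simp
  then show ?thesis
    by (rule that)
qed

lemma even_card_if_add_mod_closed:
  fixes n x :: nat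
  assumes "B \<subseteq> {0..<2 ^ n}" "0 < x" "x < 2 ^ n" "\<forall>y\<in>B. (y + x) mod 2 ^ n \<in> B"
  shows "even (card B)"
proof -
  obtain k where k: "(k * x) mod 2 ^ n = 2 ^ (n - 1)"
    using multiple_mod_pow2_eq_half[OF assms(2,3)] .
  have "n \<ge> 1"
    using assms(2,3) by (cases n) auto
  then have N: "(2::nat) ^ n = 2 * 2 ^ (n - 1)"
    by (cases n) auto
  have "(y + 2 ^ (n - 1)) mod 2 ^ n \<in> B" if "y \<in> B" for y
    using add_mod_closed_multiple[OF assms(1,4) that, of k] k by (metis mod_add_right_eq)
  then show ?thesis
    using even_card_if_add_mod_closed_half[of B "2 ^ (n - 1)"] assms(1) unfolding N by blast
qed

lemma diff_reps_less_card_if_odd: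
  assumes "B \<subseteq> {0..<2 ^ n}" "odd (card B)" "0 < x" "x < 2 ^ n"
  shows "diff_reps (2 ^ n) B x < card B"
proof (rule ccontr)
  have "finite B"
    using assms(1) finite_subset by blast
  assume "\<not> diff_reps (2 ^ n) B x < card B"
  then have "diff_reps (2 ^ n) B x = card B"
    using diff_reps_le_card[OF \<open>finite B\<close>, of "2 ^ n" x] by linarith
  then have "{y \<in> B. (x + y) mod 2 ^ n \<in> B} = B"
    unfolding diff_reps_def by (intro card_subset_eq[OF \<open>finite B\<close>]) auto
  then have "\<forall>y\<in>B. (y + x) mod 2 ^ n \<in> B"
    by (auto simp: add.commute)
  then show False
    using even_card_if_add_mod_closed[OF assms(1,3,4)] assms(2) by blast
qed

lemma card_le_sum_diff_reps_complement:
  assumes "B \<subseteq> {0..<2 ^ n}" "odd (card B)"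
  shows "card B - 1 \<le> (\<Sum>x\<in>{0..<2 ^ n} - B. diff_reps (2 ^ n) B x)"
    (is "_ \<le> ?sum_A")
proof (cases "0 \<in> B")
  case False
  then have "diff_reps (2 ^ n) B 0 \<le> ?sum_A"
    by (intro member_le_sum) auto
  then show ?thesis
    using diff_reps_0[OF assms(1)] by simp
next
  case True
  let ?r = "diff_reps (2 ^ n) B"
  have "finite B"
    using assms(1) finite_subset by blast
  have "card B ^ 2 = ?sum_A + (\<Sum>x\<in>B. ?r x)"
    using sum_diff_reps[of "2 ^ n" B] sum.subset_diff[of B "{0..<2 ^ n}" ?r] assms(1) by simp
  also have "(\<Sum>x\<in>B. ?r x) = card B + (\<Sum>x\<in>B - {0}. ?r x)"
    using sum.remove[OF \<open>finite B\<close> True, of ?r] by (simp add: diff_reps_0[OF assms(1)])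
  also have "(\<Sum>x\<in>B - {0}. ?r x) \<le> (\<Sum>x\<in>B - {0}. card B - 1)"
    using diff_reps_less_card_if_odd[OF assms] assms(1)
    by (intro sum_mono) (fastforce simp: less_Suc_eq_le)
  finally have "card B ^ 2 \<le> ?sum_A + card B + (card B - 1) * (card B - 1)"
    using True \<open>finite B\<close> by simp
  moreover obtain c where "card B = Suc c"
    using True \<open>finite B\<close> by (metis card_0_eq empty_iff not0_implies_Suc)
  ultimately show ?thesis
    by (simp add: power2_eq_square)
qed

theorem theorem1p8:
  fixes n :: nat and A :: "nat set"
  assumes "n \<ge> 1"
    and "A \<subseteq> {0..<2 ^ n}"
    and "card A = 2 ^ (n - 1) + 1"
  shows "schur_triples n A \<ge> 3 * 2 ^ (n - 1)"
proof -
  define B where "B = {0..<2 ^ n} - A"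
  have "finite A"
    using assms(2) finite_subset by blast
  have "card B = 2 ^ (n - 1) - 1"
    using card_Diff_subset[OF \<open>finite A\<close> assms(2)] assms(1,3) unfolding B_def
    by (cases n) auto
  have A_eq: "A = {0..<2 ^ n} - B"
    using assms(2) unfolding B_def by auto
  have reps_A: "diff_reps (2 ^ n) A x = diff_reps (2 ^ n) B x + 2" for x
    using diff_reps_complement[OF _ assms(2), of x] assms(3) \<open>card B = _\<close>
    unfolding B_def by simp
  then have "schur_triples n A = (\<Sum>x\<in>A. diff_reps (2 ^ n) B x) + 2 * card A"
    unfolding schur_triples_eq_sum_diff_reps[OF \<open>finite A\<close>] reps_A sum.distrib by simp
  moreover have "card B - 1 \<le> (\<Sum>x\<in>A. diff_reps (2 ^ n) B x)"
  proof (cases "n = 1")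
    case False
    then have "odd (card B)"
      using assms(1) \<open>card B = _\<close> by (cases "n - 1") auto
    then show ?thesis
      unfolding A_eq by (rule card_le_sum_diff_reps_complement[rotated]) (auto simp: B_def)
  qed (use \<open>card B = _\<close> in simp)
  ultimately show ?thesis
    using assms(3) \<open>card B = _\<close> by linarith
qed

end
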